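(* Let $\lambda_1,\lambda_2$ be as in the context, $K\in(-1,1)$ with $K\neq0$, let $b$ solve $b'(v)=\sqrt{\lambda_1^2-K(\lambda_1^2\cos^2 b(v)+\lambda_2^2\sin^2 b(v))}$, $b(0)=0$, and let $W>0$ be the unique positive real number with $b(W)=\pi$. Let $x_3$ be the solution of $x_3'(v)=\dfrac{\lambda_1\lambda_2K}{\lambda_1+b'(v)}$ with $x_3(0)=0$. Then: (1) $x_3$ is a well-defined bijection from $\mathbb{R}$ to $\mathbb{R}$; (2) $x_3$ is odd; (3) $x_3(v+W)=x_3(v)+x_3(W)$ for all $v\in\mathbb{R}$.
   Context: Either $\lambda_1>\lambda_2>0$ or $\lambda_1=\lambda_2=1$. (The solution $b$ exists on $\mathbb{R}$ and is an increasing bijection of $\mathbb{R}$, so $W$ is well defined.) *)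

theory Defs
  imports "HOL-Analysis.Analysis"
begin

end

(* Write F y = sqrt (l1^2 - K (l1^2 cos^2 y + l2^2 sin^2 y)), which is positive, even and
   pi-periodic.  The time map, an antiderivative of 1 / F, inverts b; hence b is odd and
   b (v + W) = b v + pi.  The derivative of x3 depends on v only through F (b v), so it is even
   and W-periodic, which integrates to oddness and the additivity of x3.  Since K \<noteq> 0 and F is
   bounded, that derivative has constant sign and stays away from 0, so x3 is a bijection. *)

theory Submission
  imports Defs
begin

lemma odd_if_deriv_even:
  fixes f f' :: "real \<Rightarrow> real"
  assumes f': "\<And>v. (f has_real_derivative f' v) (at v)"
    and even: "\<And>v. f' (-v) = f' v" and "f 0 = 0"
  shows "f (-v) = - f v"
proof -
  have "((\<lambda>v. f (-v)) has_real_derivative f' (-v) * -1) (at v)" for v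
    by (rule DERIV_chain2[OF f']) (auto intro!: derivative_eq_intros)
  then have "((\<lambda>v. f (-v) + f v) has_real_derivative 0) (at v)" for v
    using DERIV_add[OF _ f'] even by (metis add.left_inverse mult_minus1_right)
  from DERIV_isconst_all[OF allI[OF this], of v 0] show ?thesis
    using \<open>f 0 = 0\<close> by simp
qed

lemma add_period_if_deriv_periodic:
  fixes f f' :: "real \<Rightarrow> real"
  assumes f': "\<And>v. (f has_real_derivative f' v) (at v)"
    and periodic: "\<And>v. f' (v + p) = f' v" and "f 0 = 0"
  shows "f (v + p) = f v + f p"
proof -
  have "((\<lambda>v. f (v + p)) has_real_derivative f' (v + p) * 1) (at v)" for v
    by (rule DERIV_chain2[OF f']) (auto intro!: derivative_eq_intros)
  then have "((\<lambda>v. f (v + p) - f v) has_real_derivative 0) (at v)" for v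
    using DERIV_diff[OF _ f'] periodic by (metis diff_self mult_1_right)
  from DERIV_isconst_all[OF allI[OF this], of v 0] show ?thesis
    using \<open>f 0 = 0\<close> by simp
qed

lemma bij_if_deriv_ge:
  fixes f f' :: "real \<Rightarrow> real"
  assumes f': "\<And>v. (f has_real_derivative f' v) (at v)"
    and "d > 0" and ge: "\<And>v. d \<le> f' v"
  shows "bij f"
proof (rule bijI)
  have "f x < f y" if "x < y" for x y
    using DERIV_pos_imp_increasing[OF that] f' ge \<open>d > 0\<close> by (meson less_le_trans)
  then show "inj f"
    by (metis injI linorder_neqE_linordered_idom order_less_irrefl)
  have low: "f x - d * x \<le> f y - d * y" if "x \<le> y" for x y
    using DERIV_nonneg_imp_nondecreasing[OF that, of "\<lambda>v. f v - d * v"] f' ge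
    by (metis DERIV_diff DERIV_cmult_Id diff_ge_0_iff_ge)
  have bounds: "f (- R) \<le> f 0 - d * R" "f 0 + d * R \<le> f R" if "R \<ge> 0" for R
    using low[of "- R" 0] low[of 0 R] that by auto
  show "surj f"
  proof (rule surjI[of _ "\<lambda>t. SOME x. f x = t"], rule someI_ex)
    fix t
    define R where "R = \<bar>t - f 0\<bar> / d"
    have R: "R \<ge> 0" "d * R = \<bar>t - f 0\<bar>"
      using \<open>d > 0\<close> by (auto simp: R_def)
    have "f (- R) \<le> t" "t \<le> f R"
      using bounds[OF R(1)] R(2) by auto
    moreover have "continuous_on {- R..R} f"
      using f' by (meson DERIV_isCont continuous_at_imp_continuous_on)
    ultimately show "\<exists>x. f x = t"
      using IVT'[of f "- R" t R] R(1) by force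
  qed
qed

lemma bij_if_deriv_const_div_bounded:
  fixes f g :: "real \<Rightarrow> real"
  assumes f': "\<And>v. (f has_real_derivative c / g v) (at v)"
    and "c \<noteq> 0" and g_pos: "\<And>v. 0 < g v" and g_le: "\<And>v. g v \<le> M"
  shows "bij f"
proof -
  have "M > 0"
    using g_pos[of 0] g_le[of 0] by linarith
  have bij_pos: "bij h" if h': "\<And>v. (h has_real_derivative a / g v) (at v)" and "a > 0" for h a
  proof (rule bij_if_deriv_ge[OF h'])
    show "0 < a / M"
      using \<open>a > 0\<close> \<open>M > 0\<close> by simp
    show "a / M \<le> a / g v" for v
      using \<open>a > 0\<close> g_pos g_le by (simp add: frac_le)
  qed
  show "bij f"
  proof (cases "c > 0")
    case True
    then show ?thesis
      using bij_pos[OF f'] by blast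
  next
    case False
    have "((\<lambda>v. - f v) has_real_derivative - c / g v) (at v)" for v
      using DERIV_minus[OF f'] by simp
    with False \<open>c \<noteq> 0\<close> have "bij (uminus \<circ> (\<lambda>v. - f v))"
      using bij_pos bij_uminus bij_comp by (metis neg_0_less_iff_less linorder_neqE_linordered_idom)
    then show ?thesis
      by (simp add: comp_def)
  qed
qed

(* Inverting the time map replaces the uniqueness theory of ODEs: F need not be Lipschitz. *)
lemma autonomous_ode_inverse:
  fixes F b :: "real \<Rightarrow> real"
  assumes "continuous_on UNIV F" and F_pos: "\<And>y. F y > 0"
    and b': "\<And>v. (b has_real_derivative F (b v)) (at v)" and "b 0 = 0"
  obtains G where "\<And>y. (G has_real_derivative 1 / F y) (at y)" "G 0 = 0" "inj G"
    "\<And>v. G (b v) = v"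
proof -
  obtain H where H: "\<And>y. (H has_vector_derivative 1 / F y) (at y)"
    using einterval_antiderivative[of "-\<infinity>" "\<infinity>" "\<lambda>y. 1 / F y"] assms(1) F_pos
    by (force intro!: continuous_intros simp: continuous_on_eq_continuous_at less_imp_neq[symmetric])
  define G where "G y = H y - H 0" for y
  have G': "(G has_real_derivative 1 / F y) (at y)" for y
    unfolding G_def using H[of y]
    by (auto intro!: derivative_eq_intros simp: has_real_derivative_iff_has_vector_derivative)
  have "G 0 = 0"
    by (simp add: G_def)
  have "G x < G y" if "x < y" for x y
    using DERIV_pos_imp_increasing[OF that] G' F_pos by (meson zero_less_divide_1_iff)
  then have "inj G"
    by (metis injI linorder_neqE_linordered_idom order_less_irrefl)
  have "((\<lambda>v. G (b v) - v) has_real_derivative 0) (at v)" for v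
    using DERIV_chain2[OF G' b', of v] F_pos[of "b v"] by (auto intro!: derivative_eq_intros)
  from DERIV_isconst_all[OF allI[OF this]] have "G (b v) = v" for v
    using \<open>b 0 = 0\<close> \<open>G 0 = 0\<close> by (metis diff_zero eq_iff_diff_eq_0)
  with G' \<open>G 0 = 0\<close> \<open>inj G\<close> show thesis
    using that by blast
qed

lemma autonomous_ode_odd:
  fixes F b :: "real \<Rightarrow> real"
  assumes "continuous_on UNIV F" "\<And>y. F y > 0" "\<And>y. F (-y) = F y"
    and "\<And>v. (b has_real_derivative F (b v)) (at v)" "b 0 = 0"
  shows "b (-v) = - b v"
proof -
  obtain G where G': "\<And>y. (G has_real_derivative 1 / F y) (at y)"
    and "G 0 = 0" "inj G" "\<And>v. G (b v) = v"
    using autonomous_ode_inverse assms(1,2,4,5) by blast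
  moreover have "G (-y) = - G y" for y
    using odd_if_deriv_even[OF G'] \<open>G 0 = 0\<close> assms(3) by simp
  ultimately show ?thesis
    by (metis injD)
qed

lemma autonomous_ode_shift:
  fixes F b :: "real \<Rightarrow> real"
  assumes "continuous_on UNIV F" "\<And>y. F y > 0" "\<And>y. F (y + p) = F y"
    and "\<And>v. (b has_real_derivative F (b v)) (at v)" "b 0 = 0" "b T = p"
  shows "b (v + T) = b v + p"
proof -
  obtain G where G': "\<And>y. (G has_real_derivative 1 / F y) (at y)"
    and "G 0 = 0" "inj G" and G_b: "\<And>v. G (b v) = v"
    using autonomous_ode_inverse assms(1,2,4,5) by blast
  moreover have "G (y + p) = G y + G p" for y
    using add_period_if_deriv_periodic[OF G'] \<open>G 0 = 0\<close> assms(3) by simp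
  moreover have "G p = T"
    using G_b[of T] \<open>b T = p\<close> by simp
  ultimately show ?thesis
    by (metis injD)
qed

definition angular_speed :: "real \<Rightarrow> real \<Rightarrow> real \<Rightarrow> real \<Rightarrow> real" where
  "angular_speed l1 l2 K y = sqrt (l1\<^sup>2 - K * (l1\<^sup>2 * (cos y)\<^sup>2 + l2\<^sup>2 * (sin y)\<^sup>2))"

lemma angular_speed_minus [simp]: "angular_speed l1 l2 K (- y) = angular_speed l1 l2 K y"
  by (simp add: angular_speed_def)

lemma angular_speed_add_pi [simp]: "angular_speed l1 l2 K (y + pi) = angular_speed l1 l2 K y"
  by (simp add: angular_speed_def sin_add cos_add)

lemma continuous_on_angular_speed: "continuous_on UNIV (angular_speed l1 l2 K)"
  unfolding angular_speed_def by (intro continuous_intros)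

lemma angular_speed_radicand_bound:
  fixes l1 l2 K y :: real
  assumes "\<bar>l2\<bar> \<le> l1" "\<bar>K\<bar> < 1" "l1 > 0"
  shows "\<bar>K * (l1\<^sup>2 * (cos y)\<^sup>2 + l2\<^sup>2 * (sin y)\<^sup>2)\<bar> < l1\<^sup>2"
proof -
  define A where "A = l1\<^sup>2 * (cos y)\<^sup>2 + l2\<^sup>2 * (sin y)\<^sup>2"
  have "l2\<^sup>2 \<le> l1\<^sup>2"
    using assms(1) by (metis abs_le_square_iff abs_of_pos assms(3))
  then have "A \<le> l1\<^sup>2 * (cos y)\<^sup>2 + l1\<^sup>2 * (sin y)\<^sup>2"
    unfolding A_def by (intro add_left_mono mult_right_mono) auto
  also have "\<dots> = l1\<^sup>2"
    by (metis distrib_left mult.right_neutral sin_cos_squared_add2)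
  finally have "\<bar>K * A\<bar> \<le> \<bar>K\<bar> * l1\<^sup>2"
    by (simp add: A_def abs_mult mult_left_mono)
  also have "\<dots> < l1\<^sup>2"
    using assms by simp
  finally show ?thesis
    by (simp add: A_def)
qed

lemma angular_speed_pos:
  assumes "\<bar>l2\<bar> \<le> l1" "\<bar>K\<bar> < 1" "l1 > 0"
  shows "angular_speed l1 l2 K y > 0"
  using angular_speed_radicand_bound[OF assms, of y] by (simp add: angular_speed_def)

lemma angular_speed_le:
  assumes "\<bar>l2\<bar> \<le> l1" "\<bar>K\<bar> < 1" "l1 > 0"
  shows "angular_speed l1 l2 K y \<le> 2 * l1"
proof -
  have "l1\<^sup>2 - K * (l1\<^sup>2 * (cos y)\<^sup>2 + l2\<^sup>2 * (sin y)\<^sup>2) \<le> (2 * l1)\<^sup>2"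
    using angular_speed_radicand_bound[OF assms, of y] by (simp add: power_mult_distrib)
  then show ?thesis
    unfolding angular_speed_def using assms(3) real_le_lsqrt by auto
qed

theorem proposition4p3:
  fixes l1 l2 K W :: real and b x3 :: "real \<Rightarrow> real"
  assumes lam: "(l1 > l2 \<and> l2 > 0) \<or> (l1 = 1 \<and> l2 = 1)"
    and K: "-1 < K" "K < 1" "K \<noteq> 0"
    and b_ode: "\<And>v. (b has_real_derivative
        sqrt (l1^2 - K * (l1^2 * (cos (b v))^2 + l2^2 * (sin (b v))^2))) (at v)"
    and b0: "b 0 = 0"
    and W: "W > 0" "b W = pi"
    and x3_ode: "\<And>v. (x3 has_real_derivative
        (l1 * l2 * K) / (l1 + sqrt (l1^2 - K * (l1^2 * (cos (b v))^2 + l2^2 * (sin (b v))^2)))) (at v)"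
    and x30: "x3 0 = 0"
  shows "bij x3 \<and> (\<forall>v. x3 (-v) = - x3 v) \<and> (\<forall>v. x3 (v + W) = x3 v + x3 W)"
proof -
  let ?F = "angular_speed l1 l2 K"
  have bounds: "\<bar>l2\<bar> \<le> l1" "\<bar>K\<bar> < 1" "l1 > 0"
    using lam K by auto
  have b': "(b has_real_derivative ?F (b v)) (at v)" for v
    using b_ode unfolding angular_speed_def .
  have x3': "(x3 has_real_derivative (l1 * l2 * K) / (l1 + ?F (b v))) (at v)" for v
    using x3_ode unfolding angular_speed_def .
  note autonomous = continuous_on_angular_speed angular_speed_pos[OF bounds] _ b' b0
  have b_odd: "b (- v) = - b v" for v
    by (rule autonomous_ode_odd[OF autonomous]) simp
  have b_shift: "b (v + W) = b v + pi" for v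
    by (rule autonomous_ode_shift[OF autonomous W(2)]) simp
  have "bij x3"
  proof (rule bij_if_deriv_const_div_bounded[OF x3'])
    show "l1 * l2 * K \<noteq> 0"
      using bounds K lam by auto
    show "0 < l1 + ?F (b v)" "l1 + ?F (b v) \<le> 3 * l1" for v
      using angular_speed_pos[OF bounds] angular_speed_le[OF bounds] bounds(3) by (auto intro: add_pos_pos)
  qed
  moreover have "x3 (- v) = - x3 v" for v
    by (rule odd_if_deriv_even[OF x3' _ x30]) (simp add: b_odd)
  moreover have "x3 (v + W) = x3 v + x3 W" for v
    by (rule add_period_if_deriv_periodic[OF x3' _ x30]) (simp add: b_shift)
  ultimately show ?thesis
    by blast
qed

end
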